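(* Let $X_B'\subseteq\mathbb{P}^5$ be the image of the morphism $$\eta:\mathbb{P}^2\ni(a:b:c)\longmapsto \big(a^3: b^3: c^3: a(b^2-c^2): b(a^2-c^2): c(a^2-b^2)\big)\in\mathbb{P}^5,$$ and let $Z\subset\mathbb{P}^2$ be the set of nine points $(1:0:0),(0:1:0),(0:0:1),(1:1:0),(1:-1:0),(1:0:1),(1:0:-1),(0:1:1),(0:1:-1)$. Then $X_B'$ is hypo-osculating; more precisely, $\dim \mathrm{Osc}^{(2)}_{\eta(Q)}X_B'=4$ for all $Q\in\mathbb{P}^2\setminus Z$, while $\dim\mathrm{Osc}^{(2)}_{\eta(Q)}X_B'=3$ for each of the nine points $Q\in Z$.
   Context: For a point $\eta(Q)$ of the surface $X_B'$ parametrized by $\eta$, the second osculating space $\mathrm{Osc}^{(2)}_{\eta(Q)}X_B'$ is the linear subspace of $\mathbb{P}^5$ spanned by the point and the partial derivatives of order $\le 2$ of the coordinate functions with respect to local parameters at the point, evaluated there (equivalently, the projectivized span of all second-order partial derivatives of the cubic forms defining $\eta$ with respect to $a,b,c$, evaluated at $Q$). A surface in $\mathbb{P}^5$ is hypo-osculating if this dimension is lower than the expected value $5$ at every point. *)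

theory Defs
  imports "HOL-Analysis.Analysis"
begin

text \<open>Homogeneous coordinates: a point (a:b:c) of P^2(C) is represented by a nonzero
  vector Q in complex^3 with Q$1 = a, Q$2 = b, Q$3 = c.  The morphism eta is given by
  its six cubic forms.\<close>

definition eta :: "complex^3 \<Rightarrow> complex^6" where
  "eta Q = (let a = Q$1; b = Q$2; c = Q$3 in
     vector [a^3, b^3, c^3, a*(b^2 - c^2), b*(a^2 - c^2), c*(a^2 - b^2)])"

definition pd :: "3 \<Rightarrow> (complex^3 \<Rightarrow> complex^6) \<Rightarrow> complex^3 \<Rightarrow> complex^6" where
  "pd i F Q = (\<chi> k. deriv (\<lambda>t. F (Q + t *s axis i 1) $ k) 0)"

text \<open>Vectors spanning (the affine cone over) the second osculating space at eta(Q):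
  the point together with all partial derivatives of order 1 and 2.\<close>

definition osc2_gens :: "complex^3 \<Rightarrow> (complex^6) set" where
  "osc2_gens Q = {eta Q} \<union> {pd i eta Q | i. True} \<union> {pd i (pd j eta) Q | i j. True}"

text \<open>Projective dimension of the second osculating space: linear dimension of the span
  (over C) minus one.\<close>

definition osc2_dim :: "complex^3 \<Rightarrow> int" where
  "osc2_dim Q = int (vec.dim (osc2_gens Q)) - 1"

definition Zreps :: "(complex^3) set" where
  "Zreps = {vector [1,0,0], vector [0,1,0], vector [0,0,1],
            vector [1,1,0], vector [1,-1,0], vector [1,0,1],
            vector [1,0,-1], vector [0,1,1], vector [0,1,-1]}"

definition inZ :: "complex^3 \<Rightarrow> bool" where
  "inZ Q \<longleftrightarrow> (\<exists>z\<in>Zreps. \<exists>c::complex. c \<noteq> 0 \<and> Q = c *s z)"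

definition hypo_osculating :: bool where
  "hypo_osculating \<longleftrightarrow> (\<forall>Q::complex^3. Q \<noteq> 0 \<longrightarrow> osc2_dim Q < 5)"

end

theory Submission
  imports Defs
begin

text \<open>By Euler's relation for the cubic forms of \<open>\<eta>\<close>, the point \<open>\<eta>(Q)\<close> and the first
  partials at \<open>Q\<close> are combinations of the six second partials, so the second osculating
  space is the span of the second partials, which are linear in \<open>Q = (a:b:c)\<close>. They always
  satisfy \<open>c \<partial>\<^sub>1\<^sub>2\<eta> + b \<partial>\<^sub>1\<^sub>3\<eta> + a \<partial>\<^sub>2\<^sub>3\<eta> = 0\<close>, so they span at most a
  5-dimensional subspace of \<open>\<complex>\<^sup>6\<close>. An explicit rank computation gives exactly 5 when
  \<open>abc \<noteq> 0\<close>, and on the line \<open>c = 0\<close> exactly 5 unless \<open>ab(a\<^sup>2 - b\<^sup>2) = 0\<close>, i.e. unless \<open>Q\<close>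
  is one of the four points of \<open>Z\<close> on that line, where it is 4. The cyclic symmetry
  \<open>(a,b,c) \<mapsto> (b,c,a)\<close> of \<open>\<eta>\<close>, which is a signed permutation of the coordinates of \<open>\<P>\<^sup>5\<close>,
  carries this over to the other two coordinate lines.\<close>

lemma exhaust_6:
  fixes x :: 6
  shows "x = 1 \<or> x = 2 \<or> x = 3 \<or> x = 4 \<or> x = 5 \<or> x = 6"
proof (induct x)
  case (of_int z)
  then have "z = 0 \<or> z = 1 \<or> z = 2 \<or> z = 3 \<or> z = 4 \<or> z = 5" by fastforce
  then show ?case by auto
qed

lemma forall_6: "(\<forall>i::6. P i) \<longleftrightarrow> P 1 \<and> P 2 \<and> P 3 \<and> P 4 \<and> P 5 \<and> P 6"
  by (metis exhaust_6)

lemma vector_6 [simp]: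
  "(vector [x1,x2,x3,x4,x5,x6] :: 'a::zero^6) $ 1 = x1"
  "(vector [x1,x2,x3,x4,x5,x6] :: 'a::zero^6) $ 2 = x2"
  "(vector [x1,x2,x3,x4,x5,x6] :: 'a::zero^6) $ 3 = x3"
  "(vector [x1,x2,x3,x4,x5,x6] :: 'a::zero^6) $ 4 = x4"
  "(vector [x1,x2,x3,x4,x5,x6] :: 'a::zero^6) $ 5 = x5"
  "(vector [x1,x2,x3,x4,x5,x6] :: 'a::zero^6) $ 6 = x6"
  by (simp_all add: vector_def)

lemma vec6_eq_iff: "x = y \<longleftrightarrow>
    x$1 = y$1 \<and> x$2 = y$2 \<and> x$3 = y$3 \<and> x$4 = y$4 \<and> x$5 = y$5 \<and> (x :: 'a^6)$6 = y$6"
  unfolding vec_eq_iff forall_6 ..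

lemma vec3_eq_iff: "x = y \<longleftrightarrow> x$1 = y$1 \<and> x$2 = y$2 \<and> (x :: 'a^3)$3 = y$3"
  unfolding vec_eq_iff forall_3 ..

definition deta :: "complex^3 \<Rightarrow> complex^3 \<Rightarrow> complex^6" where
  "deta Q u = (let a = Q$1; b = Q$2; c = Q$3 in
     vector [3*a^2*u$1, 3*b^2*u$2, 3*c^2*u$3,
       u$1*(b^2 - c^2) + 2*a*(b*u$2 - c*u$3),
       u$2*(a^2 - c^2) + 2*b*(a*u$1 - c*u$3),
       u$3*(a^2 - b^2) + 2*c*(a*u$1 - b*u$2)])"

definition d2eta :: "complex^3 \<Rightarrow> complex^3 \<Rightarrow> complex^3 \<Rightarrow> complex^6" where
  "d2eta Q u w = (let a = Q$1; b = Q$2; c = Q$3 in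
     vector [6*a*u$1*w$1, 6*b*u$2*w$2, 6*c*u$3*w$3,
       2*(a*(u$2*w$2 - u$3*w$3) + b*(u$1*w$2 + u$2*w$1) - c*(u$1*w$3 + u$3*w$1)),
       2*(b*(u$1*w$1 - u$3*w$3) + a*(u$1*w$2 + u$2*w$1) - c*(u$2*w$3 + u$3*w$2)),
       2*(c*(u$1*w$1 - u$2*w$2) + a*(u$1*w$3 + u$3*w$1) - b*(u$2*w$3 + u$3*w$2))])"

lemma deriv_eta_along_line: "deriv (\<lambda>t. eta (Q + t *s u) $ k) 0 = deta Q u $ k"
  using exhaust_6[of k]
  by (elim disjE) (simp_all add: eta_def deta_def Let_def,
      (rule DERIV_imp_deriv; (rule derivative_eq_intros refl)+; simp add: algebra_simps)+)

lemma deriv_deta_along_line: "deriv (\<lambda>t. deta (Q + t *s w) u $ k) 0 = d2eta Q u w $ k"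
  using exhaust_6[of k]
  by (elim disjE) (simp_all add: deta_def d2eta_def Let_def,
      (rule DERIV_imp_deriv; (rule derivative_eq_intros refl)+; simp add: algebra_simps)+)

lemma pd_eta: "pd i eta Q = deta Q (axis i 1)"
  by (simp add: pd_def deriv_eta_along_line vec_eq_iff)

lemma pd_pd_eta: "pd i (pd j eta) Q = d2eta Q (axis j 1) (axis i 1)"
proof -
  have "pd j eta = (\<lambda>Q. deta Q (axis j 1))"
    by (simp add: pd_eta fun_eq_iff)
  then show ?thesis
    by (simp add: pd_def deriv_deta_along_line vec_eq_iff)
qed

lemma deta_Euler: "deta Q Q = 3 *s eta Q"
  by (simp add: vec6_eq_iff deta_def eta_def Let_def algebra_simps power2_eq_square power3_eq_cube)

lemma d2eta_Euler: "d2eta Q u Q = 2 *s deta Q u"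
  by (simp add: vec6_eq_iff deta_def d2eta_def Let_def algebra_simps power2_eq_square)

lemma deta_axis_expansion: "deta Q w = (\<Sum>i\<in>UNIV. w$i *s deta Q (axis i 1))"
  by (simp add: vec6_eq_iff deta_def Let_def sum_3 axis_def algebra_simps)

lemma d2eta_axis_expansion: "d2eta Q u w = (\<Sum>i\<in>UNIV. w$i *s d2eta Q u (axis i 1))"
  by (simp add: vec6_eq_iff d2eta_def Let_def sum_3 axis_def algebra_simps)

lemma span_osc2_gens: "vec.span (osc2_gens Q) = vec.span {pd i (pd j eta) Q | i j. True}"
  (is "_ = vec.span ?H")
proof -
  have pd_in_span: "pd i eta Q \<in> vec.span ?H" for i
  proof -
    have "pd i eta Q = (1/2) *s (\<Sum>j\<in>UNIV. Q$j *s pd j (pd i eta) Q)"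
      using d2eta_Euler[of Q "axis i 1"] d2eta_axis_expansion[of Q "axis i 1" Q]
      by (simp add: pd_eta pd_pd_eta)
    also have "\<dots> \<in> vec.span ?H"
      by (intro vec.span_scale vec.span_sum vec.span_base) blast
    finally show ?thesis .
  qed
  have "eta Q = (1/3) *s (\<Sum>i\<in>UNIV. Q$i *s pd i eta Q)"
    using deta_Euler[of Q] deta_axis_expansion[of Q Q] by (simp add: pd_eta)
  also have "\<dots> \<in> vec.span ?H"
    by (intro vec.span_scale vec.span_sum pd_in_span)
  finally have "osc2_gens Q \<subseteq> vec.span ?H"
    using pd_in_span vec.span_superset[of ?H] unfolding osc2_gens_def by auto
  moreover have "?H \<subseteq> vec.span (osc2_gens Q)"
    using vec.span_superset[of "osc2_gens Q"] unfolding osc2_gens_def by blast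
  ultimately show ?thesis
    by (simp only: vec.span_eq)
qed

definition second_partials :: "complex \<Rightarrow> complex \<Rightarrow> complex \<Rightarrow> (complex^6) set" where
  "second_partials a b c =
     {vector [6*a, 0, 0, 0, 2*b, 2*c], vector [0, 6*b, 0, 2*a, 0, -2*c],
      vector [0, 0, 6*c, -2*a, -2*b, 0], vector [0, 0, 0, 2*b, 2*a, 0],
      vector [0, 0, 0, -2*c, 0, 2*a], vector [0, 0, 0, 0, -2*c, -2*b]}"

lemma d2eta_commute: "d2eta Q u w = d2eta Q w u"
  by (simp add: d2eta_def Let_def vec6_eq_iff algebra_simps)

lemma second_partials_eq_d2eta:
  "second_partials (Q$1) (Q$2) (Q$3) =
     {d2eta Q (axis 1 1) (axis 1 1), d2eta Q (axis 2 1) (axis 2 1), d2eta Q (axis 3 1) (axis 3 1),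
      d2eta Q (axis 1 1) (axis 2 1), d2eta Q (axis 1 1) (axis 3 1), d2eta Q (axis 2 1) (axis 3 1)}"
  unfolding second_partials_def
  by (intro arg_cong2[where f = insert] refl; simp add: d2eta_def axis_def Let_def vec6_eq_iff)

lemma pd_pd_eta_set: "{pd i (pd j eta) Q | i j. True} = second_partials (Q$1) (Q$2) (Q$3)"
  unfolding second_partials_eq_d2eta pd_pd_eta
proof (intro equalityI subsetI)
  fix x assume "x \<in> {d2eta Q (axis j 1) (axis i 1) | i j. True}"
  then obtain i j where "x = d2eta Q (axis j 1) (axis i 1)" by blast
  then show "x \<in> {d2eta Q (axis 1 1) (axis 1 1), d2eta Q (axis 2 1) (axis 2 1),
      d2eta Q (axis 3 1) (axis 3 1), d2eta Q (axis 1 1) (axis 2 1),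
      d2eta Q (axis 1 1) (axis 3 1), d2eta Q (axis 2 1) (axis 3 1)}"
    using exhaust_3[of i] exhaust_3[of j] d2eta_commute[of Q "axis j 1" "axis i 1"]
    by (elim disjE) simp_all
qed blast

lemma osc2_dim_second_partials:
  "osc2_dim Q = int (vec.dim (second_partials (Q$1) (Q$2) (Q$3))) - 1"
proof -
  have "vec.dim (osc2_gens Q) = vec.dim (vec.span (osc2_gens Q))"
    by simp
  also have "\<dots> = vec.dim (second_partials (Q$1) (Q$2) (Q$3))"
    unfolding span_osc2_gens vec.dim_span pd_pd_eta_set ..
  finally show ?thesis
    by (simp add: osc2_dim_def)
qed

lemma vec_dim_eq_length:
  fixes vs :: "('a::field ^ 'n) list"
  assumes indep: "\<And>c. (\<Sum>i<length vs. c i *s vs ! i) = 0 \<Longrightarrow> \<forall>i<length vs. c i = 0"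
    and vs_S: "set vs \<subseteq> S" and S_vs: "S \<subseteq> vec.span (set vs)"
  shows "vec.dim S = length vs"
proof -
  have "distinct vs"
    unfolding distinct_conv_nth
  proof (intro allI impI notI)
    fix i j assume ij: "i < length vs" "j < length vs" "i \<noteq> j" "vs ! i = vs ! j"
    define c where "c k = (if k = i then 1 else if k = j then -1 else 0 :: 'a)" for k
    have "(\<Sum>k<length vs. c k *s vs ! k)
        = (\<Sum>k<length vs. (if k = i then vs ! i else 0) - (if k = j then vs ! j else 0))"
      by (rule sum.cong) (use ij in \<open>auto simp: c_def\<close>)
    also have "\<dots> = 0"
      using ij by (simp add: sum_subtractf)
    finally have "c i = 0" using indep ij(1) by blast
    then show False by (simp add: c_def)
  qed
  have "vec.independent (set vs)"
    unfolding vec.independent_explicit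
  proof (intro conjI allI impI ballI)
    fix u v assume u: "(\<Sum>v\<in>set vs. u v *s v) = 0" and "v \<in> set vs"
    then obtain i where i: "i < length vs" "v = vs ! i" by (auto simp: in_set_conv_nth)
    have "(\<Sum>k<length vs. u (vs ! k) *s vs ! k) = 0"
      using u sum.reindex_bij_betw[OF bij_betw_nth[OF \<open>distinct vs\<close> refl refl], of "\<lambda>v. u v *s v"]
      by simp
    then show "u v = 0" using indep[of "\<lambda>k. u (vs ! k)"] i by simp
  qed simp
  then show ?thesis
    using vec.dim_unique[OF vs_S S_vs] distinct_card[OF \<open>distinct vs\<close>] by blast
qed

lemma dim_second_partials_rotate:
  "vec.dim (second_partials a b c) = vec.dim (second_partials b c a)"
proof -
  define T :: "complex^6 \<Rightarrow> complex^6" where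
    "T x = vector [x$2, x$3, x$1, -x$5, -x$6, x$4]" for x
  have "Vector_Spaces.linear (*s) (*s) T"
    by (simp add: Vector_Spaces.linear_iff vec.vector_space_axioms T_def vec6_eq_iff)
  moreover have "inj T"
    by (rule injI) (simp add: T_def vec6_eq_iff)
  moreover have "second_partials b c a = T ` second_partials a b c"
    by (simp add: second_partials_def T_def insert_commute)
  ultimately show ?thesis
    by (simp add: vec.dim_image_eq inj_on_subset)
qed

lemma dim_second_partials_generic:
  assumes "a \<noteq> 0" "b \<noteq> 0" "c \<noteq> 0"
  shows "vec.dim (second_partials a b c) = 5"
proof -
  let ?vs = "[vector [6*a, 0, 0, 0, 2*b, 2*c], vector [0, 6*b, 0, 2*a, 0, -2*c],
      vector [0, 0, 6*c, -2*a, -2*b, 0], vector [0, 0, 0, 2*b, 2*a, 0],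
      vector [0, 0, 0, -2*c, 0, 2*a]] :: (complex^6) list"
  have "vec.dim (second_partials a b c) = length ?vs"
  proof (rule vec_dim_eq_length)
    fix x assume "(\<Sum>i<length ?vs. x i *s ?vs ! i) = 0"
    then show "\<forall>i<length ?vs. x i = 0"
      using assms by (auto simp: vec6_eq_iff less_Suc_eq)
  next
    show "set ?vs \<subseteq> second_partials a b c"
      by (simp add: second_partials_def)
  next
    have "vector [0, 0, 0, 0, -2*c, -2*b] = (- c / a) *s ?vs ! 3 + (- b / a) *s ?vs ! 4"
      using assms by (simp add: vec6_eq_iff field_simps)
    then show "second_partials a b c \<subseteq> vec.span (set ?vs)"
      unfolding second_partials_def
      by (simp add: vec.span_base vec.span_diff vec.span_neg vec.span_scale)
  qed
  then show ?thesis by simp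
qed

lemma dim_second_partials_plane_nondegenerate:
  assumes "a \<noteq> 0" "b \<noteq> 0" "a\<^sup>2 \<noteq> b\<^sup>2"
  shows "vec.dim (second_partials a b 0) = 5"
proof -
  let ?vs = "[vector [6*a, 0, 0, 0, 2*b, 0], vector [0, 6*b, 0, 2*a, 0, 0],
      vector [0, 0, 0, -2*a, -2*b, 0], vector [0, 0, 0, 2*b, 2*a, 0],
      vector [0, 0, 0, 0, 0, 2*a]] :: (complex^6) list"
  have "vec.dim (second_partials a b 0) = length ?vs"
  proof (rule vec_dim_eq_length)
    fix x assume "(\<Sum>i<length ?vs. x i *s ?vs ! i) = 0"
    then have x_zero: "x 0 = 0" "x 1 = 0" "x 4 = 0"
      and "a * x 2 = b * x 3" "b * x 2 = a * x 3"
      using assms by (auto simp: vec6_eq_iff numeral_eq_Suc algebra_simps)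
    then have "(a\<^sup>2 - b\<^sup>2) * x 2 = 0"
      by algebra
    then have "x 2 = 0" "x 3 = 0"
      using assms \<open>a * x 2 = b * x 3\<close> by auto
    with x_zero show "\<forall>i<length ?vs. x i = 0"
      by (simp add: less_Suc_eq numeral_eq_Suc)
  next
    show "set ?vs \<subseteq> second_partials a b 0"
      by (simp add: second_partials_def)
  next
    have "vector [0, 0, 0, 0, 0, -2*b] = (- b / a) *s ?vs ! 4"
      using assms by (simp add: vec6_eq_iff field_simps)
    then show "second_partials a b 0 \<subseteq> vec.span (set ?vs)"
      unfolding second_partials_def
      by (simp add: vec.span_base vec.span_neg vec.span_scale)
  qed
  then show ?thesis by simp
qed

lemma dim_second_partials_plane_degenerate:
  assumes "a \<noteq> 0" "b * (a\<^sup>2 - b\<^sup>2) = 0"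
  shows "vec.dim (second_partials a b 0) = 4"
proof -
  let ?vs = "[vector [6*a, 0, 0, 0, 2*b, 0], vector [0, 6*b, 0, 2*a, 0, 0],
      vector [0, 0, 0, 2*b, 2*a, 0], vector [0, 0, 0, 0, 0, 2*a]] :: (complex^6) list"
  have "vec.dim (second_partials a b 0) = length ?vs"
  proof (rule vec_dim_eq_length)
    fix x assume "(\<Sum>i<length ?vs. x i *s ?vs ! i) = 0"
    then show "\<forall>i<length ?vs. x i = 0"
      using assms(1) by (auto simp: vec6_eq_iff less_Suc_eq)
  next
    show "set ?vs \<subseteq> second_partials a b 0"
      by (simp add: second_partials_def)
  next
    have "vector [0, 0, 0, -2*a, -2*b, 0] \<in> vec.span (set ?vs)"
    proof (cases "b = 0")
      case True
      then have "vector [0, 0, 0, -2*a, -2*b, 0] = - ?vs ! 1"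
        by (simp add: vec6_eq_iff)
      then show ?thesis
        by (simp add: vec.span_base vec.span_neg)
    next
      case False
      with assms have "a\<^sup>2 = b\<^sup>2" by simp
      with False have "vector [0, 0, 0, -2*a, -2*b, 0] = (- a / b) *s ?vs ! 2"
        by (simp add: vec6_eq_iff field_simps power2_eq_square)
      then show ?thesis
        by (simp add: vec.span_base vec.span_neg vec.span_scale)
    qed
    moreover have "vector [0, 0, 0, 0, 0, -2*b] = (- b / a) *s ?vs ! 3"
      using assms by (simp add: vec6_eq_iff field_simps)
    ultimately show "second_partials a b 0 \<subseteq> vec.span (set ?vs)"
      unfolding second_partials_def
      by (simp add: vec.span_base vec.span_neg vec.span_scale)
  qed
  then show ?thesis by simp
qed

lemma dim_second_partials_plane:
  assumes "a \<noteq> 0 \<or> b \<noteq> 0"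
  shows "vec.dim (second_partials a b 0) = (if a * b * (a\<^sup>2 - b\<^sup>2) = 0 then 4 else 5)"
proof (cases "a = 0")
  case True
  with assms have "vec.dim (second_partials b 0 0) = 4"
    by (simp add: dim_second_partials_plane_degenerate)
  with True show ?thesis
    using dim_second_partials_rotate[of 0 b 0] by simp
next
  case False
  then show ?thesis
    by (simp add: dim_second_partials_plane_degenerate dim_second_partials_plane_nondegenerate)
qed

lemma inZ_vector_iff:
  "inZ (vector [a, b, c]) \<longleftrightarrow> (a \<noteq> 0 \<or> b \<noteq> 0 \<or> c \<noteq> 0) \<and>
     (c = 0 \<and> a * b * (a\<^sup>2 - b\<^sup>2) = 0 \<or> a = 0 \<and> b * c * (b\<^sup>2 - c\<^sup>2) = 0 \<or>
      b = 0 \<and> c * a * (c\<^sup>2 - a\<^sup>2) = 0)"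
  (is "_ \<longleftrightarrow> ?nonzero \<and> ?on_lines")
proof
  assume "inZ (vector [a, b, c])"
  then show "?nonzero \<and> ?on_lines"
    by (auto simp: inZ_def Zreps_def vec3_eq_iff)
next
  assume Z: "?nonzero \<and> ?on_lines"
  have multiple: "inZ (vector [a, b, c])"
    if "z \<in> Zreps" "k \<noteq> 0" "vector [a, b, c] = k *s z" for z k
    using that unfolding inZ_def by blast
  from Z consider "b = 0" "c = 0" | "a = 0" "c = 0" | "a = 0" "b = 0"
    | "c = 0" "b = a" | "c = 0" "b = -a" | "a = 0" "c = b" | "a = 0" "c = -b"
    | "b = 0" "c = a" | "b = 0" "c = -a"
    by (auto simp: power2_eq_iff)
  then show "inZ (vector [a, b, c])"
  proof cases
    case 1
    with Z show ?thesis
      by (intro multiple[of "vector [1, 0, 0]" a]) (auto simp: Zreps_def vec3_eq_iff)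
  next
    case 2
    with Z show ?thesis
      by (intro multiple[of "vector [0, 1, 0]" b]) (auto simp: Zreps_def vec3_eq_iff)
  next
    case 3
    with Z show ?thesis
      by (intro multiple[of "vector [0, 0, 1]" c]) (auto simp: Zreps_def vec3_eq_iff)
  next
    case 4
    with Z show ?thesis
      by (intro multiple[of "vector [1, 1, 0]" a]) (auto simp: Zreps_def vec3_eq_iff)
  next
    case 5
    with Z show ?thesis
      by (intro multiple[of "vector [1, -1, 0]" a]) (auto simp: Zreps_def vec3_eq_iff)
  next
    case 6
    with Z show ?thesis
      by (intro multiple[of "vector [0, 1, 1]" b]) (auto simp: Zreps_def vec3_eq_iff)
  next
    case 7
    with Z show ?thesis
      by (intro multiple[of "vector [0, 1, -1]" b]) (auto simp: Zreps_def vec3_eq_iff)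
  next
    case 8
    with Z show ?thesis
      by (intro multiple[of "vector [1, 0, 1]" a]) (auto simp: Zreps_def vec3_eq_iff)
  next
    case 9
    with Z show ?thesis
      by (intro multiple[of "vector [1, 0, -1]" a]) (auto simp: Zreps_def vec3_eq_iff)
  qed
qed

lemma dim_second_partials:
  assumes "a \<noteq> 0 \<or> b \<noteq> 0 \<or> c \<noteq> 0"
  shows "vec.dim (second_partials a b c) = (if inZ (vector [a, b, c]) then 4 else 5)"
proof -
  consider "c = 0" | "a = 0" | "b = 0" | "a \<noteq> 0" "b \<noteq> 0" "c \<noteq> 0"
    by blast
  then show ?thesis
  proof cases
    case 1
    with assms show ?thesis
      by (simp add: dim_second_partials_plane inZ_vector_iff)
  next
    case 2
    with assms show ?thesis
      using dim_second_partials_rotate[of a b c] dim_second_partials_plane[of b c]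
      by (auto simp: inZ_vector_iff)
  next
    case 3
    with assms show ?thesis
      using dim_second_partials_rotate[of c a b] dim_second_partials_plane[of c a]
      by (auto simp: inZ_vector_iff algebra_simps)
  next
    case 4
    then show ?thesis
      by (simp add: dim_second_partials_generic inZ_vector_iff)
  qed
qed

lemma osc2_dim_eq:
  assumes "Q \<noteq> 0"
  shows "osc2_dim Q = (if inZ Q then 3 else 4)"
proof -
  have Q: "Q = vector [Q$1, Q$2, Q$3]"
    by (simp add: vec3_eq_iff)
  from assms have "Q$1 \<noteq> 0 \<or> Q$2 \<noteq> 0 \<or> Q$3 \<noteq> 0"
    by (auto simp: vec3_eq_iff)
  then show ?thesis
    using dim_second_partials Q by (simp add: osc2_dim_second_partials)
qed

theorem mainTheorem5:
  shows "hypo_osculating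
    \<and> (\<forall>Q::complex^3. Q \<noteq> 0 \<and> \<not> inZ Q \<longrightarrow> osc2_dim Q = 4)
    \<and> (\<forall>Q::complex^3. Q \<noteq> 0 \<and> inZ Q \<longrightarrow> osc2_dim Q = 3)"
  by (simp add: hypo_osculating_def osc2_dim_eq)

end
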